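(* Let $F$, $G$, $\Sigma_A$, $\pi$, $C$, $R$ be as in the context. For $\omega\in\Sigma_A$ let $I_\omega:=\bigcap_{n\ge1}g_{\omega_{-1}}\circ\cdots\circ g_{\omega_{-n}}(I)$ and for $\xi\in\Sigma_N$ let $I_\xi:=\bigcap_{n\ge1}f_{\xi_{-1}}\circ\cdots\circ f_{\xi_{-n}}(I)$. Then $I_\omega=I_{\pi(\omega)}$ for every $\omega\in C$ and $I_\omega=R(I_{\pi(\omega)})$ for every $\omega\in\Sigma_A\setminus C$.
   Context: $I=[0,1]$, $R(x)=1-x$. $F(\xi,p)=(\sigma(\xi),f_{\xi_0}(p))$ on $\Sigma_N\times I$, $\Sigma_N=\{1,\ldots,N\}^{\mathbb Z}$, with $f_i$ $C^1$-diffeomorphisms onto their images. $\mathcal I_P$ / $\mathcal I_R$: indices of orientation preserving / reversing $f_i$. $A=(a_{ij})_{i,j=1}^{2N}$ with $a_{ij}=1$ if ($i\in\mathcal I_P$, $j\le N$), or ($i\in\mathcal I_R$, $j>N$), or ($i-N\in\mathcal I_P$, $j>N$), or ($i-N\in\mathcal I_R$, $j\le N$), else $0$; $\Sigma_A$ the $A$-admissible bi-infinite sequences in $\{1,\ldots,2N\}$ with shift $\sigma_A$; $\pi(\omega)_n=\overline{\omega_n}$ where $\overline i=i$ for $i\le N$, $\overline i=i-N$ for $i>N$. $G(\omega,x)=(\sigma_A(\omega),g_{\omega_0}(x))$ with $g_i=f_i$, $g_{i+N}=R\circ f_i\circ R$ for $i\in\mathcal I_P$, and $g_i=R\circ f_i$,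 $g_{i+N}=f_i\circ R$ for $i\in\mathcal I_R$. $C=\{\omega\in\Sigma_A\colon\omega_0\le N\}$. *)

theory Defs
  imports "HOL-Analysis.Analysis"
begin

abbreviation unitI :: "real set" where "unitI \<equiv> {0..1}"

definition Rfl :: "real \<Rightarrow> real" where "Rfl x = 1 - x"

text \<open>A C^1 diffeomorphism of I onto its image (contained in I): C^1 with
  nonvanishing derivative (so its inverse on the image is C^1) and injective.\<close>
definition C1_diffeo_into_I :: "(real \<Rightarrow> real) \<Rightarrow> bool" where
  "C1_diffeo_into_I h \<longleftrightarrow>
     h ` unitI \<subseteq> unitI \<and> inj_on h unitI \<and>
     (\<exists>h'. continuous_on unitI h' \<and>
        (\<forall>x\<in>unitI. (h has_real_derivative h' x) (at x within unitI) \<and> h' x \<noteq> 0))"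

definition IP :: "nat \<Rightarrow> (nat \<Rightarrow> real \<Rightarrow> real) \<Rightarrow> nat set" where
  "IP N f = {i \<in> {1..N}. strict_mono_on unitI (f i)}"

definition IR :: "nat \<Rightarrow> (nat \<Rightarrow> real \<Rightarrow> real) \<Rightarrow> nat set" where
  "IR N f = {i \<in> {1..N}. strict_antimono_on unitI (f i)}"

definition SigmaN :: "nat \<Rightarrow> (int \<Rightarrow> nat) set" where
  "SigmaN N = {\<xi>. \<forall>n. \<xi> n \<in> {1..N}}"

definition amat :: "nat \<Rightarrow> (nat \<Rightarrow> real \<Rightarrow> real) \<Rightarrow> nat \<Rightarrow> nat \<Rightarrow> bool" where
  "amat N f i j \<longleftrightarrow>
     (i \<in> IP N f \<and> j \<le> N) \<or> (i \<in> IR N f \<and> j > N) \<or>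
     (i > N \<and> i - N \<in> IP N f \<and> j > N) \<or> (i > N \<and> i - N \<in> IR N f \<and> j \<le> N)"

definition SigmaA :: "nat \<Rightarrow> (nat \<Rightarrow> real \<Rightarrow> real) \<Rightarrow> (int \<Rightarrow> nat) set" where
  "SigmaA N f = {\<omega>. \<forall>n. \<omega> n \<in> {1..2*N} \<and> amat N f (\<omega> n) (\<omega> (n+1))}"

definition bar :: "nat \<Rightarrow> nat \<Rightarrow> nat" where
  "bar N i = (if i \<le> N then i else i - N)"

definition proj :: "nat \<Rightarrow> (int \<Rightarrow> nat) \<Rightarrow> (int \<Rightarrow> nat)" where
  "proj N \<omega> = (\<lambda>n. bar N (\<omega> n))"

definition gmap :: "nat \<Rightarrow> (nat \<Rightarrow> real \<Rightarrow> real) \<Rightarrow> nat \<Rightarrow> real \<Rightarrow> real" where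
  "gmap N f i =
     (if i \<le> N then (if i \<in> IP N f then f i else Rfl \<circ> f i)
      else (if i - N \<in> IP N f then Rfl \<circ> f (i - N) \<circ> Rfl else f (i - N) \<circ> Rfl))"

definition cylC :: "nat \<Rightarrow> (nat \<Rightarrow> real \<Rightarrow> real) \<Rightarrow> (int \<Rightarrow> nat) set" where
  "cylC N f = {\<omega> \<in> SigmaA N f. \<omega> 0 \<le> N}"

primrec back_comp :: "(nat \<Rightarrow> real \<Rightarrow> real) \<Rightarrow> (int \<Rightarrow> nat) \<Rightarrow> nat \<Rightarrow> real \<Rightarrow> real" where
  "back_comp h w 0 = id"
| "back_comp h w (Suc n) = back_comp h w n \<circ> h (w (- int (Suc n)))"

definition fiber :: "(nat \<Rightarrow> real \<Rightarrow> real) \<Rightarrow> (int \<Rightarrow> nat) \<Rightarrow> real set" where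
  "fiber h w = (\<Inter>n\<in>{1..}. back_comp h w n ` unitI)"

end

theory Submission
  imports Defs
begin

text \<open>The transition matrix is set up so that each g-map is an f-map conjugated by
  reflections: g_(omega k) = R^[omega (k+1) > N] o f_(bar (omega k)) o R^[omega k > N],
  where R^[b] is R if b holds and the identity otherwise. In the backward composition
  g_(omega -1) o ... o g_(omega -n) the inner reflections cancel in pairs, and the innermost
  one maps I onto I, so the image of I is R^[omega 0 > N] applied to the corresponding
  image for pi(omega).\<close>

definition reflect_if :: "bool \<Rightarrow> real \<Rightarrow> real" where
  "reflect_if b = (if b then Rfl else id)"

lemma reflect_if_involution: "reflect_if b \<circ> reflect_if b = id"
  by (auto simp: reflect_if_def Rfl_def fun_eq_iff)

lemma reflect_if_unitI: "reflect_if b ` unitI = unitI"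
proof -
  have "Rfl ` unitI = unitI"
    by (auto simp: Rfl_def image_iff intro!: exI[where x="1 - _"])
  then show ?thesis by (auto simp: reflect_if_def)
qed

lemma IP_IR_disjoint: "IP N f \<inter> IR N f = {}"
proof (rule ccontr)
  assume "IP N f \<inter> IR N f \<noteq> {}"
  then obtain i where "strict_mono_on unitI (f i)" "strict_antimono_on unitI (f i)"
    by (auto simp: IP_def IR_def)
  then have "f i 0 < f i 1" "f i 0 > f i 1"
    by (auto simp: strict_mono_on_def monotone_on_def)
  then show False by simp
qed

lemma IP_le: "i \<in> IP N f \<Longrightarrow> i \<le> N"
  by (auto simp: IP_def)

lemma IR_le: "i \<in> IR N f \<Longrightarrow> i \<le> N"
  by (auto simp: IR_def)

lemma gmap_conj_reflect_if:
  assumes "\<omega> \<in> SigmaA N f"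
  shows "gmap N f (\<omega> k) = reflect_if (\<omega> (k+1) > N) \<circ> f (bar N (\<omega> k)) \<circ> reflect_if (\<omega> k > N)"
proof -
  have "amat N f (\<omega> k) (\<omega> (k+1))"
    using assms by (auto simp: SigmaA_def)
  then show ?thesis
    using IP_IR_disjoint[of N f] IP_le[of "\<omega> k" N f] IR_le[of "\<omega> k" N f]
    unfolding amat_def gmap_def bar_def reflect_if_def
    by (auto simp: fun_eq_iff)
qed

lemma back_comp_conj:
  fixes r :: "int \<Rightarrow> real \<Rightarrow> real"
  assumes conj: "\<And>k. h (w k) = r (k+1) \<circ> f (v k) \<circ> r k"
    and involution: "\<And>k. r k \<circ> r k = id"
  shows "back_comp h w n = r 0 \<circ> back_comp f v n \<circ> r (- int n)"
proof (induction n)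
  case 0
  then show ?case by (simp add: involution)
next
  case (Suc n)
  have "- int (Suc n) + 1 = - int n" by simp
  then have "h (w (- int (Suc n))) = r (- int n) \<circ> f (v (- int (Suc n))) \<circ> r (- int (Suc n))"
    by (metis conj)
  moreover have "r k (r k x) = x" for k x
    using involution[of k] by (simp add: fun_eq_iff)
  ultimately show ?case
    by (simp add: Suc.IH fun_eq_iff)
qed

lemma fiber_conj:
  fixes r :: "int \<Rightarrow> real \<Rightarrow> real"
  assumes conj: "\<And>k. h (w k) = r (k+1) \<circ> f (v k) \<circ> r k"
    and involution: "\<And>k. r k \<circ> r k = id"
    and onto_unitI: "\<And>k. r k ` unitI = unitI"
  shows "fiber h w = r 0 ` fiber f v"
proof -
  have "back_comp h w n ` unitI = r 0 ` back_comp f v n ` unitI" for n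
  proof -
    have "back_comp h w n ` unitI = (r 0 \<circ> back_comp f v n) ` r (- int n) ` unitI"
      by (simp only: back_comp_conj[of h w r f v n, OF conj involution] image_comp)
    then show ?thesis
      by (simp add: onto_unitI image_comp)
  qed
  moreover have "bij (r 0)"
    using involution[of 0] involution[of 0] by (rule o_bij)
  ultimately show ?thesis
    unfolding fiber_def by (simp add: bij_image_INT)
qed

lemma fiber_gmap:
  assumes "\<omega> \<in> SigmaA N f"
  shows "fiber (gmap N f) \<omega> = reflect_if (\<omega> 0 > N) ` fiber f (proj N \<omega>)"
  using gmap_conj_reflect_if[OF assms]
  by (intro fiber_conj) (auto simp: proj_def reflect_if_involution reflect_if_unitI)

theorem lemma3p7:
  fixes N :: nat and f :: "nat \<Rightarrow> real \<Rightarrow> real"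
  assumes "\<forall>i\<in>{1..N}. C1_diffeo_into_I (f i)"
  shows "(\<forall>\<omega>\<in>cylC N f. fiber (gmap N f) \<omega> = fiber f (proj N \<omega>))
       \<and> (\<forall>\<omega>\<in>SigmaA N f - cylC N f. fiber (gmap N f) \<omega> = Rfl ` fiber f (proj N \<omega>))"
  using fiber_gmap by (auto simp: cylC_def reflect_if_def)

end
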